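(* Let $I$ be a bounded open interval containing $0$, let $f\in C^\infty(I)$ be real-valued, and suppose the series $\hat f$ converges uniformly on $I$ (its sum need not be constant). Let $F(x):=\int_0^x f(s)\,ds$ for $x\in I$. Then the series $\hat F$ converges uniformly on $I$ and $\hat F(x)=F(0)=0$ for all $x\in I$.
   Context: For a smooth function $h$ on an interval containing the point $t$, $\hat h(t)$ denotes the series $\hat h(t):=\sum_{n=0}^{\infty}\frac{(-1)^n}{n!}\,t^n h^{(n)}(t)$; convergence of $\hat h$ refers to convergence of its partial sums, and $\hat h(t)$ also denotes the sum. *)

theory Defs
  imports "HOL-Analysis.Analysis"
begin

definition nth_deriv :: "nat \<Rightarrow> (real \<Rightarrow> real) \<Rightarrow> real \<Rightarrow> real" where
  "nth_deriv n h = (deriv ^^ n) h"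

definition smooth_on :: "real set \<Rightarrow> (real \<Rightarrow> real) \<Rightarrow> bool" where
  "smooth_on I h \<longleftrightarrow>
     (\<forall>n. \<forall>x\<in>I. (nth_deriv n h has_real_derivative nth_deriv (Suc n) h x) (at x))"

definition hat_term :: "(real \<Rightarrow> real) \<Rightarrow> nat \<Rightarrow> real \<Rightarrow> real" where
  "hat_term h n t = (-1) ^ n / fact n * t ^ n * nth_deriv n h t"

definition hat_partial :: "(real \<Rightarrow> real) \<Rightarrow> nat \<Rightarrow> real \<Rightarrow> real" where
  "hat_partial h N t = (\<Sum>n<N. hat_term h n t)"

end

theory Submission
  imports Defs
begin

text \<open>
  Write I = (a,b) with a < 0 < b and F for the primitive of f vanishing at 0.
  The key observation is a telescoping identity: for every function h smooth on I,
    (d/dx) \<Sum>n\<le>N. (-1)^n/n! x^n h^(n)(x) = (-1)^N/N! x^N h^(N+1)(x).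
  Since F^(n+1) = f^(n) on I, the derivative of the (N+1)-st partial sum of hat F
  is exactly the N-th term of hat f.  That partial sum vanishes at 0 because F(0) = 0,
  so the mean value theorem bounds it by |x| times a value of the N-th term of hat f.
  Uniform convergence of hat f forces its terms to tend to 0 uniformly on I, and since
  |x| is bounded on I, the partial sums of hat F tend to 0 = F(0) uniformly on I.
\<close>

lemma iter_deriv_cong:
  assumes "open S" and "\<And>y. y \<in> S \<Longrightarrow> g y = h y" and "x \<in> S"
  shows "(deriv ^^ n) g x = (deriv ^^ n) h x"
  using assms(3)
proof (induction n arbitrary: x)
  case 0
  then show ?case using assms(2) by simp
next
  case (Suc n)
  have "eventually (\<lambda>y. y \<in> S) (nhds x)"
    using assms(1) Suc.prems by (rule eventually_nhds_in_open)
  then have "eventually (\<lambda>y. (deriv ^^ n) g y = (deriv ^^ n) h y) (nhds x)"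
    by eventually_elim (rule Suc.IH)
  then show ?case by (simp add: deriv_cong_ev)
qed

lemma nth_deriv_primitive:
  assumes "open S" and "\<And>y. y \<in> S \<Longrightarrow> (F has_real_derivative f y) (at y)" and "x \<in> S"
  shows "nth_deriv (Suc n) F x = nth_deriv n f x"
proof -
  have "nth_deriv (Suc n) F x = (deriv ^^ n) (deriv F) x"
    unfolding nth_deriv_def by (simp add: funpow_Suc_right del: funpow.simps)
  also have "\<dots> = (deriv ^^ n) f x"
    using assms by (intro iter_deriv_cong) (auto intro: DERIV_imp_deriv)
  finally show ?thesis by (simp add: nth_deriv_def)
qed

lemma smooth_on_primitive:
  assumes "open S" and F': "\<And>y. y \<in> S \<Longrightarrow> (F has_real_derivative f y) (at y)"
    and "smooth_on S f"
  shows "smooth_on S F"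
  unfolding smooth_on_def
proof (intro allI ballI)
  fix n x assume x: "x \<in> S"
  have shift: "\<And>m y. y \<in> S \<Longrightarrow> nth_deriv (Suc m) F y = nth_deriv m f y"
    using nth_deriv_primitive[OF assms(1) F'] by blast
  show "(nth_deriv n F has_real_derivative nth_deriv (Suc n) F x) (at x)"
  proof (cases n)
    case 0
    then show ?thesis using F'[OF x] shift[OF x, of 0] by (simp add: nth_deriv_def)
  next
    case (Suc m)
    have "(nth_deriv m f has_real_derivative nth_deriv (Suc n) F x) (at x)"
      using assms(3) x shift[OF x, of n] Suc unfolding smooth_on_def by simp
    then show ?thesis
      unfolding Suc by (rule has_field_derivative_transform_within_open[OF _ assms(1) x])
        (simp add: shift)
  qed
qed

lemma smooth_on_imp_continuous_on:
  assumes "smooth_on S f"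
  shows "continuous_on S f"
proof (rule continuous_at_imp_continuous_on, rule ballI)
  fix x assume "x \<in> S"
  then have "(nth_deriv 0 f has_real_derivative nth_deriv (Suc 0) f x) (at x)"
    using assms unfolding smooth_on_def by blast
  then show "isCont f x" by (auto simp: nth_deriv_def intro: DERIV_isCont)
qed

lemma primitive_has_derivative:
  fixes f :: "real \<Rightarrow> real"
  assumes "continuous_on {a<..<b} f" and "c \<in> {a<..<b}" and "x \<in> {a<..<b}"
  shows "((\<lambda>x. LBINT s=c..x. f s) has_real_derivative f x) (at x)"
proof -
  define d where "d = (a + min c x) / 2"
  define e where "e = (b + max c x) / 2"
  have de: "a < d" "d < c" "d < x" "e < b" "c < e" "x < e"
    using assms(2,3) unfolding d_def e_def by auto
  then have "{d..e} \<subseteq> {a<..<b}" by auto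
  then have "continuous_on {d..e} f"
    using assms(1) continuous_on_subset by blast
  then have "((\<lambda>x. LBINT s=c..x. f s) has_vector_derivative f x) (at x within {d..e})"
    using interval_integral_FTC2[of d c e f x] de by simp
  then have "((\<lambda>x. LBINT s=c..x. f s) has_vector_derivative f x) (at x within {d<..<e})"
    by (rule has_vector_derivative_within_subset) auto
  then have "((\<lambda>x. LBINT s=c..x. f s) has_vector_derivative f x) (at x)"
    using de by (subst (asm) has_vector_derivative_within_open) auto
  then show ?thesis by (simp add: has_real_derivative_iff_has_vector_derivative)
qed

lemma hat_partial_Suc_at_0: "hat_partial h (Suc N) 0 = h 0"
  unfolding hat_partial_def sum.lessThan_Suc_shift by (simp add: hat_term_def nth_deriv_def)

text \<open>The product rule applied to consecutive terms makes the derivative of the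
  partial sum of hat h telescope down to a single term.\<close>
lemma hat_partial_has_derivative:
  assumes "smooth_on S h" and x: "x \<in> S"
  shows "(hat_partial h (Suc N) has_real_derivative
            (-1) ^ N / fact N * x ^ N * nth_deriv (Suc N) h x) (at x)"
proof (induction N)
  case 0
  have "hat_partial h (Suc 0) = nth_deriv 0 h"
    by (auto simp: hat_partial_def hat_term_def)
  then show ?case using assms unfolding smooth_on_def by simp
next
  case (Suc N)
  define c :: real where "c = (-1) ^ Suc N / fact (Suc N)"
  have c_Suc: "c * real (Suc N) = - ((-1) ^ N / fact N)"
    unfolding c_def by (simp add: divide_simps)
  have step: "hat_partial h (Suc (Suc N))
      = (\<lambda>t. hat_partial h (Suc N) t + c * t ^ Suc N * nth_deriv (Suc N) h t)"
    by (auto simp: hat_partial_def hat_term_def c_def)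
  have dh: "(nth_deriv (Suc N) h has_real_derivative nth_deriv (Suc (Suc N)) h x) (at x)"
    using assms unfolding smooth_on_def by blast
  have "((\<lambda>t. c * t ^ Suc N) has_real_derivative c * (real (Suc N) * x ^ N)) (at x)"
    using DERIV_cmult[OF DERIV_pow[of "Suc N" x UNIV]] by simp
  from DERIV_mult[OF this dh] have term': "((\<lambda>t. c * t ^ Suc N * nth_deriv (Suc N) h t)
      has_real_derivative c * (real (Suc N) * x ^ N) * nth_deriv (Suc N) h x
        + nth_deriv (Suc (Suc N)) h x * (c * x ^ Suc N)) (at x)" .
  have "c * (real (Suc N) * x ^ N) = - ((-1) ^ N / fact N) * x ^ N"
    using c_Suc by (metis mult.assoc)
  then have cancel: "(-1) ^ N / fact N * x ^ N * nth_deriv (Suc N) h x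
      + (c * (real (Suc N) * x ^ N) * nth_deriv (Suc N) h x
        + nth_deriv (Suc (Suc N)) h x * (c * x ^ Suc N))
      = c * x ^ Suc N * nth_deriv (Suc (Suc N)) h x"
    by simp
  show ?case
    unfolding step by (rule DERIV_cong[OF DERIV_add[OF Suc.IH term']]) (simp add: cancel c_def)
qed

lemma mvt_bound_from_0:
  fixes g g' :: "real \<Rightarrow> real"
  assumes "a < 0" "0 < b" and g': "\<And>t. t \<in> {a<..<b} \<Longrightarrow> (g has_real_derivative g' t) (at t)"
    and "g 0 = 0" and x: "x \<in> {a<..<b}"
  shows "\<exists>z\<in>{a<..<b}. \<bar>g x\<bar> \<le> \<bar>x\<bar> * \<bar>g' z\<bar>"
proof (cases x "0::real" rule: linorder_cases)
  case less
  have "\<exists>z. x < z \<and> z < 0 \<and> g 0 - g x = (0 - x) * g' z"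
  proof (rule MVT2[OF less])
    show "(g has_real_derivative g' t) (at t)" if "x \<le> t" "t \<le> 0" for t
      using that x assms(2) by (intro g') auto
  qed
  then obtain z where "x < z" "z < 0" "g 0 - g x = (0 - x) * g' z" by blast
  then show ?thesis using x assms(2,4) by (intro bexI[of _ z]) (auto simp: abs_mult)
next
  case equal
  then show ?thesis using assms by auto
next
  case greater
  have "\<exists>z. 0 < z \<and> z < x \<and> g x - g 0 = (x - 0) * g' z"
  proof (rule MVT2[OF greater])
    show "(g has_real_derivative g' t) (at t)" if "0 \<le> t" "t \<le> x" for t
      using that x assms(1) by (intro g') auto
  qed
  then obtain z where "0 < z" "z < x" "g x - g 0 = (x - 0) * g' z" by blast
  then show ?thesis using x assms(1,4) by (intro bexI[of _ z]) (auto simp: abs_mult)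
qed

lemma hat_partial_primitive_bound:
  assumes "a < 0" "0 < b" and "smooth_on {a<..<b} f"
    and G': "\<And>y. y \<in> {a<..<b} \<Longrightarrow> (G has_real_derivative f y) (at y)"
    and "hat_partial G (Suc N) 0 = 0" and x: "x \<in> {a<..<b}"
  shows "\<exists>z\<in>{a<..<b}. \<bar>hat_partial G (Suc N) x\<bar> \<le> max (-a) b * \<bar>hat_term f N z\<bar>"
proof -
  have "(hat_partial G (Suc N) has_real_derivative hat_term f N y) (at y)"
    if y: "y \<in> {a<..<b}" for y
    using hat_partial_has_derivative[OF smooth_on_primitive[OF _ G' assms(3)] y]
      nth_deriv_primitive[OF _ G' y] by (simp add: hat_term_def)
  from mvt_bound_from_0[OF assms(1,2) this assms(5) x]
  obtain z where z: "z \<in> {a<..<b}" "\<bar>hat_partial G (Suc N) x\<bar> \<le> \<bar>x\<bar> * \<bar>hat_term f N z\<bar>"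
    by blast
  have "\<bar>x\<bar> * \<bar>hat_term f N z\<bar> \<le> max (-a) b * \<bar>hat_term f N z\<bar>"
    using x by (intro mult_right_mono) auto
  with z show ?thesis by (intro bexI[of _ z]) auto
qed

lemma uniform_limit_terms_of_uniformly_convergent_series:
  fixes u :: "nat \<Rightarrow> 'a \<Rightarrow> 'b::real_normed_vector"
  assumes "uniformly_convergent_on S (\<lambda>N x. \<Sum>n<N. u n x)"
  shows "uniform_limit S u (\<lambda>_. 0) sequentially"
  unfolding uniform_limit_sequentially_iff
proof (intro allI impI)
  fix e :: real assume "e > 0"
  then obtain M where M: "\<And>x m n. x \<in> S \<Longrightarrow> m \<ge> M \<Longrightarrow> n \<ge> M \<Longrightarrow>
      dist (\<Sum>k<m. u k x) (\<Sum>k<n. u k x) < e"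
    using uniformly_convergent_Cauchy[OF assms] unfolding uniformly_Cauchy_on_def by metis
  have "dist (u N x) 0 < e" if "N \<ge> M" "x \<in> S" for N x
    using M[OF that(2), of "Suc N" N] that by (simp add: dist_norm)
  then show "\<exists>M. \<forall>N\<ge>M. \<forall>x\<in>S. dist (u N x) 0 < e" by blast
qed

lemma uniform_limit_zero_dominated:
  fixes G u :: "nat \<Rightarrow> 'a \<Rightarrow> real"
  assumes u: "uniform_limit S u (\<lambda>_. 0) sequentially" and "R > 0"
    and dom: "\<And>N x. x \<in> S \<Longrightarrow> \<exists>z\<in>S. \<bar>G (Suc N) x\<bar> \<le> R * \<bar>u N z\<bar>"
  shows "uniform_limit S G (\<lambda>_. 0) sequentially"
  unfolding uniform_limit_sequentially_iff dist_real_def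
proof (intro allI impI)
  fix e :: real assume "e > 0"
  then obtain M where M: "\<And>N z. N \<ge> M \<Longrightarrow> z \<in> S \<Longrightarrow> \<bar>u N z\<bar> < e / R"
    using u \<open>R > 0\<close> unfolding uniform_limit_sequentially_iff dist_real_def
    by (metis diff_zero divide_pos_pos)
  have "\<bar>G (Suc N) x\<bar> < e" if N: "N \<ge> M" and x: "x \<in> S" for N x
  proof -
    obtain z where z: "z \<in> S" "\<bar>G (Suc N) x\<bar> \<le> R * \<bar>u N z\<bar>"
      using dom[OF x] by blast
    have "R * \<bar>u N z\<bar> < R * (e / R)"
      using M[OF N z(1)] \<open>R > 0\<close> by (intro mult_strict_left_mono)
    then show ?thesis using z(2) \<open>R > 0\<close> by simp
  qed
  then have "\<forall>n\<ge>Suc M. \<forall>x\<in>S. \<bar>G n x - 0\<bar> < e"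
    by (metis Suc_le_D Suc_le_mono diff_zero)
  then show "\<exists>M. \<forall>n\<ge>M. \<forall>x\<in>S. \<bar>G n x - 0\<bar> < e" by blast
qed

theorem theorem9:
  fixes a b :: real and f :: "real \<Rightarrow> real"
  assumes "a < 0" and "0 < b"
    and "smooth_on {a<..<b} f"
    and "uniformly_convergent_on {a<..<b} (hat_partial f)"
  defines "F \<equiv> (\<lambda>x. LBINT s=0..x. f s)"
  shows "uniformly_convergent_on {a<..<b} (hat_partial F)
         \<and> (\<forall>x\<in>{a<..<b}. (\<lambda>n. hat_term F n x) sums F 0 \<and> F 0 = 0)"
proof -
  have cont: "continuous_on {a<..<b} f"
    using assms(3) by (rule smooth_on_imp_continuous_on)
  have F': "(F has_real_derivative f x) (at x)" if "x \<in> {a<..<b}" for x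
    using primitive_has_derivative[OF cont _ that, of 0] assms(1,2)
    unfolding F_def zero_ereal_def by simp
  have "F 0 = 0" unfolding F_def by simp
  then have "hat_partial F (Suc N) 0 = 0" for N
    by (simp add: hat_partial_Suc_at_0 zero_ereal_def)
  from hat_partial_primitive_bound[OF assms(1,2,3) F' this]
  have dom: "\<And>N x. x \<in> {a<..<b} \<Longrightarrow>
      \<exists>z\<in>{a<..<b}. \<bar>hat_partial F (Suc N) x\<bar> \<le> max (-a) b * \<bar>hat_term f N z\<bar>" .
  have terms: "uniform_limit {a<..<b} (hat_term f) (\<lambda>_. 0) sequentially"
    using assms(4) unfolding hat_partial_def
    by (rule uniform_limit_terms_of_uniformly_convergent_series)
  have "max (-a) b > 0" using assms(2) by simp
  from uniform_limit_zero_dominated[OF terms this dom]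
  have lim: "uniform_limit {a<..<b} (hat_partial F) (\<lambda>_. 0) sequentially" .
  have "(\<lambda>n. hat_term F n x) sums F 0" if "x \<in> {a<..<b}" for x
    using tendsto_uniform_limitI[OF lim that] \<open>F 0 = 0\<close> unfolding sums_def hat_partial_def by simp
  then show ?thesis
    using lim \<open>F 0 = 0\<close> unfolding uniformly_convergent_on_def by blast
qed

end
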